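(* Let $\chi$ be the solution of the cell problem. (a) If $0<c_\psi\le\psi\le C_\psi$, then $\|\chi\|_{L^\infty(N,p)}\le\frac p2\frac{C_\psi}{c_\psi}$. (b) If in addition $\|D_X\psi\|_{L^\infty(N,p)}\le C'_\psi$, then \[ \max_{1\le i\le N}|D_X\psi^0(X_i)|\le\frac{C_\psi}{c_\psi}C'_\psi,\qquad \|D_X\chi\|_{L^\infty(N,p)}\le p\frac{C'_\psi}{c_\psi}. \]
   Context: Let $\epsilon>0$ and $N,p$ positive integers; $X_i=\epsilon i$, $Y_j=j$. Two-scale functions $g:\epsilon\mathbb Z\times\mathbb Z\to\mathbb R$ satisfy $g(X_{i+N},Y_j)=g(X_i,Y_j)=g(X_i,Y_{j+p})$; $D_Xg(X_i,Y_j)=(g(X_{i+1},Y_j)-g(X_i,Y_j))/\epsilon$, $D_Yg(X_i,Y_j)=g(X_i,Y_{j+1})-g(X_i,Y_j)$, $\langle g\rangle_Y(X_i)=\frac1p\sum_{j=1}^pg(X_i,Y_j)$, $\|g\|_{L^\infty(N,p)}=\max_{1\le i\le N,1\le j\le p}|g(X_i,Y_j)|$. $\psi$ is a two-scale function with $0<c_\psi\le\psi(X_i,Y_j)\le C_\psi$ for all $i,j$. The homogenized tensor is $\psi^0(X_i)=\langle1/\psi(X_i,\cdot)\rangle_Y^{-1}$, with $D_X\psi^0(X_i)=(\psi^0(X_{i+1})-\psi^0(X_i))/\epsilon$. The cell solution $\chi$ is the two-scale function with $\langle\chi(X_i,\cdot)\rangle_Y=0$ and $-D_Y(\psi D_Y\chi)=D_Y\psi$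 at every $(X_i,Y_j)$. *)

theory Defs
  imports Complex_Main
begin

text \<open>Two-scale functions are represented by their values on the index lattice:
  g i j stands for g(X_i, Y_j) with X_i = eps*i, Y_j = j, i, j integers.\<close>

definition two_scale :: "nat \<Rightarrow> nat \<Rightarrow> (int \<Rightarrow> int \<Rightarrow> real) \<Rightarrow> bool" where
  "two_scale N p g \<longleftrightarrow> (\<forall>i j. g (i + int N) j = g i j \<and> g i (j + int p) = g i j)"

definition DX :: "real \<Rightarrow> (int \<Rightarrow> int \<Rightarrow> real) \<Rightarrow> int \<Rightarrow> int \<Rightarrow> real" where
  "DX eps g i j = (g (i + 1) j - g i j) / eps"

definition DY :: "(int \<Rightarrow> int \<Rightarrow> real) \<Rightarrow> int \<Rightarrow> int \<Rightarrow> real" where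
  "DY g i j = g i (j + 1) - g i j"

definition meanY :: "nat \<Rightarrow> (int \<Rightarrow> int \<Rightarrow> real) \<Rightarrow> int \<Rightarrow> real" where
  "meanY p g i = (1 / real p) * (\<Sum>j = 1..int p. g i j)"

definition Linf :: "nat \<Rightarrow> nat \<Rightarrow> (int \<Rightarrow> int \<Rightarrow> real) \<Rightarrow> real" where
  "Linf N p g = Max {\<bar>g i j\<bar> | i j. i \<in> {1..int N} \<and> j \<in> {1..int p}}"

definition psi0 :: "nat \<Rightarrow> (int \<Rightarrow> int \<Rightarrow> real) \<Rightarrow> int \<Rightarrow> real" where
  "psi0 p psi i = inverse (meanY p (\<lambda>i' j. 1 / psi i' j) i)"

definition DX1 :: "real \<Rightarrow> (int \<Rightarrow> real) \<Rightarrow> int \<Rightarrow> real" where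
  "DX1 eps f i = (f (i + 1) - f i) / eps"

definition cell_solution :: "nat \<Rightarrow> nat \<Rightarrow> (int \<Rightarrow> int \<Rightarrow> real) \<Rightarrow> (int \<Rightarrow> int \<Rightarrow> real) \<Rightarrow> bool" where
  "cell_solution N p psi chi \<longleftrightarrow> two_scale N p chi \<and> (\<forall>i. meanY p chi i = 0) \<and>
     (\<forall>i j. - DY (\<lambda>i' j'. psi i' j' * DY chi i' j') i j = DY psi i j)"

end

theory Submission imports Defs begin

text \<open>The cell equation says that the flux \<open>\<psi> (1 + D\<^sub>Y\<chi>)\<close> is constant in \<open>Y\<close>; periodicity of
  \<open>\<chi>\<close> forces this constant to be the harmonic mean \<open>\<psi>\<^sup>0\<close>, so \<open>D\<^sub>Y\<chi> = \<psi>\<^sup>0/\<psi> - 1\<close> explicitly.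
  A \<open>p\<close>-periodic sequence of zero mean is bounded by half its total variation over one period,
  which gives (a). For (b), \<open>\<psi>\<^sup>0\<close> and \<open>D\<^sub>Y\<chi>\<close> depend on \<open>\<psi>\<close> only through reciprocals,
  and \<open>|1/a - 1/b| \<le> |a - b|/(c b)\<close> turns the bound on \<open>D\<^sub>X\<psi>\<close> into bounds on \<open>D\<^sub>X\<psi>\<^sup>0\<close> and on
  the total variation of \<open>D\<^sub>X\<chi>\<close> in \<open>Y\<close>.\<close>

lemma sum_int_telescope:
  fixes f :: "int \<Rightarrow> real"
  assumes "a \<le> b"
  shows "(\<Sum>m\<in>{a..<b}. f (m + 1) - f m) = f b - f a"
  using assms
proof (induction b rule: int_ge_induct)
  case (step i)
  then have "{a..<i + 1} = insert i {a..<i}" by auto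
  then show ?case using step by simp
qed simp

lemma shift_invariant_const:
  fixes F :: "int \<Rightarrow> 'a"
  assumes "\<And>j. F (j + 1) = F j"
  shows "F j = F 0"
proof (induction j rule: int_induct[where k = 0])
  case (step2 i)
  then show ?case using assms[of "i - 1"] by simp
qed (use assms in simp_all)

lemma sum_int_atLeastLessThan_concat:
  fixes a j b :: int
  assumes "a \<le> j" "j \<le> b"
  shows "sum g {a..<j} + sum g {j..<b} = sum g {a..<b}"
  using assms by (simp add: sum.union_disjoint[symmetric] ivl_disj_un)

lemma periodic_oscillation_le:
  fixes f :: "int \<Rightarrow> real"
  assumes per: "f (int p + 1) = f 1" and jk: "j \<in> {1..int p}" "k \<in> {1..int p}"
  shows "2 * \<bar>f j - f k\<bar> \<le> (\<Sum>m = 1..int p. \<bar>f (m + 1) - f m\<bar>)"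
proof -
  let ?d = "\<lambda>m. f (m + 1) - f m" and ?g = "\<lambda>m. \<bar>f (m + 1) - f m\<bar>"
  have ordered: "2 * \<bar>f j - f k\<bar> \<le> sum ?g {1..<int p + 1}"
    if "1 \<le> j" "j \<le> k" "k \<le> int p" for j k
  proof -
    \<comment> \<open>go from \<open>j\<close> to \<open>k\<close> directly, and back through the period \<open>k \<rightarrow> p + 1 \<equiv> 1 \<rightarrow> j\<close>\<close>
    have "f k - f j = sum ?d {j..<k}"
      using sum_int_telescope[of j k f] that by simp
    then have direct: "\<bar>f j - f k\<bar> \<le> sum ?g {j..<k}"
      by (metis abs_minus_commute sum_abs)
    have "f j - f k = sum ?d {k..<int p + 1} + sum ?d {1..<j}"
      using sum_int_telescope[of k "int p + 1" f] sum_int_telescope[of 1 j f] that per by simp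
    then have around: "\<bar>f j - f k\<bar> \<le> sum ?g {k..<int p + 1} + sum ?g {1..<j}"
      using abs_triangle_ineq[of "sum ?d {k..<int p + 1}" "sum ?d {1..<j}"]
        sum_abs[of ?d "{k..<int p + 1}"] sum_abs[of ?d "{1..<j}"] by linarith
    have "sum ?g {1..<int p + 1} = sum ?g {1..<j} + sum ?g {j..<k} + sum ?g {k..<int p + 1}"
      using sum_int_atLeastLessThan_concat[of 1 j k ?g]
        sum_int_atLeastLessThan_concat[of 1 k "int p + 1" ?g] that by simp
    with direct around show ?thesis by argo
  qed
  have "{1..int p} = {1..<int p + 1}" by auto
  moreover have "2 * \<bar>f j - f k\<bar> \<le> sum ?g {1..<int p + 1}"
  proof (cases "j \<le> k")
    case True
    then show ?thesis using ordered[of j k] jk by simp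
  next
    case False
    then show ?thesis using ordered[of k j] jk by (simp add: abs_minus_commute)
  qed
  ultimately show ?thesis by simp
qed

lemma periodic_zero_sum_abs_le:
  fixes f :: "int \<Rightarrow> real"
  assumes "p > 0" and per: "f (int p + 1) = f 1" and zero_sum: "(\<Sum>j = 1..int p. f j) = 0"
    and j: "j \<in> {1..int p}"
  shows "\<bar>f j\<bar> \<le> (\<Sum>m = 1..int p. \<bar>f (m + 1) - f m\<bar>) / 2"
proof -
  define T where "T = (\<Sum>m = 1..int p. \<bar>f (m + 1) - f m\<bar>)"
  have "real p * f j = (\<Sum>k = 1..int p. f j - f k)"
    using zero_sum by (simp add: sum_subtractf)
  then have "real p * \<bar>f j\<bar> \<le> (\<Sum>k = 1..int p. \<bar>f j - f k\<bar>)"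
    by (metis abs_mult abs_of_nat sum_abs)
  also have "\<dots> \<le> (\<Sum>k = 1..int p. T / 2)"
    using periodic_oscillation_le[OF per j] unfolding T_def by (intro sum_mono) fastforce
  finally show ?thesis
    using \<open>p > 0\<close> unfolding T_def by (simp add: mult_le_cancel_left_pos)
qed

lemma Linf_eq_Max_image:
  "Linf N p g = Max ((\<lambda>(i, j). \<bar>g i j\<bar>) ` ({1..int N} \<times> {1..int p}))"
proof -
  have "{\<bar>g i j\<bar> | i j. i \<in> {1..int N} \<and> j \<in> {1..int p}}
      = (\<lambda>(i, j). \<bar>g i j\<bar>) ` ({1..int N} \<times> {1..int p})"
    by fastforce
  then show ?thesis unfolding Linf_def by simp
qed

lemma Linf_leI:
  assumes "N > 0" "p > 0" "\<And>i j. i \<in> {1..int N} \<Longrightarrow> j \<in> {1..int p} \<Longrightarrow> \<bar>g i j\<bar> \<le> B"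
  shows "Linf N p g \<le> B"
  unfolding Linf_eq_Max_image using assms by (simp add: Max_le_iff)

lemma abs_le_Linf:
  assumes "i \<in> {1..int N}" "j \<in> {1..int p}"
  shows "\<bar>g i j\<bar> \<le> Linf N p g"
  unfolding Linf_eq_Max_image using assms by (intro Max_ge) auto

lemma psi0_eq: "psi0 p psi i = real p / (\<Sum>j = 1..int p. 1 / psi i j)"
  unfolding psi0_def meanY_def by (simp add: field_simps)

lemma psi0_mult_sum_inverse:
  assumes "p > 0" "\<And>j. j \<in> {1..int p} \<Longrightarrow> psi i j > 0"
  shows "psi0 p psi i * (\<Sum>j = 1..int p. 1 / psi i j) = real p"
proof -
  have "(\<Sum>j = 1..int p. 1 / psi i j) > 0"
    using assms by (intro sum_pos) auto
  then show ?thesis unfolding psi0_eq by simp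
qed

lemma psi0_pos:
  assumes "p > 0" "\<And>j. j \<in> {1..int p} \<Longrightarrow> psi i j > 0"
  shows "psi0 p psi i > 0"
  unfolding psi0_eq using assms by (intro divide_pos_pos sum_pos) auto

lemma psi0_bounds:
  assumes "p > 0" "c > 0" "\<And>j. j \<in> {1..int p} \<Longrightarrow> c \<le> psi i j \<and> psi i j \<le> C"
  shows "c \<le> psi0 p psi i \<and> psi0 p psi i \<le> C"
proof -
  define S where "S = (\<Sum>j = 1..int p. 1 / psi i j)"
  have "(\<Sum>j = 1..int p. 1 / C) \<le> S" "S \<le> (\<Sum>j = 1..int p. 1 / c)"
    unfolding S_def using assms by (intro sum_mono; force intro: frac_le)+
  then have lower: "real p / C \<le> S" and upper: "S \<le> real p / c" by simp_all
  have "S > 0"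
    unfolding S_def using assms by (intro sum_pos) force+
  moreover have "C > 0" using assms(2) assms(3)[of 1] \<open>p > 0\<close> by force
  ultimately show ?thesis
    unfolding psi0_eq S_def[symmetric] using lower upper \<open>c > 0\<close> by (simp add: field_simps)
qed

lemma sum_abs_inverse_diff_le:
  fixes a b :: "'a \<Rightarrow> real"
  assumes "c > 0" and "\<And>j. j \<in> A \<Longrightarrow> c \<le> a j" and "\<And>j. j \<in> A \<Longrightarrow> b j > 0"
    and "\<And>j. j \<in> A \<Longrightarrow> \<bar>a j - b j\<bar> \<le> \<delta>"
  shows "(\<Sum>j\<in>A. \<bar>1 / a j - 1 / b j\<bar>) \<le> \<delta> / c * (\<Sum>j\<in>A. 1 / b j)"
  unfolding sum_distrib_left
proof (rule sum_mono)
  fix j assume j: "j \<in> A"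
  have pos: "a j > 0" "b j > 0" using assms j by force+
  have "0 \<le> \<delta>" using assms(4)[OF j] by linarith
  have "\<bar>1 / a j - 1 / b j\<bar> = \<bar>a j - b j\<bar> / a j * (1 / b j)"
    using pos by (simp add: field_simps abs_divide abs_minus_commute)
  also have "\<dots> \<le> \<delta> / c * (1 / b j)"
    using assms(2,4)[OF j] pos \<open>0 \<le> \<delta>\<close> \<open>c > 0\<close> by (intro mult_right_mono frac_le) simp_all
  finally show "\<bar>1 / a j - 1 / b j\<bar> \<le> \<delta> / c * (1 / b j)" .
qed

lemma psi0_diff_le:
  assumes "p > 0" "c > 0"
    and "\<And>j. j \<in> {1..int p} \<Longrightarrow> c \<le> psi i j \<and> c \<le> psi i' j"
    and "\<And>j. j \<in> {1..int p} \<Longrightarrow> \<bar>psi i j - psi i' j\<bar> \<le> \<delta>"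
  shows "\<bar>psi0 p psi i' - psi0 p psi i\<bar> \<le> psi0 p psi i * \<delta> / c"
proof -
  define S where "S k = (\<Sum>j = 1..int p. 1 / psi k j)" for k
  have S_pos: "S i > 0" "S i' > 0"
    unfolding S_def using assms by (intro sum_pos; force)+
  have "\<bar>S i - S i'\<bar> \<le> \<delta> / c * S i'"
    unfolding S_def sum_subtractf[symmetric]
    using assms by (intro order.trans[OF sum_abs sum_abs_inverse_diff_le]) force+
  then have "real p * \<bar>S i - S i'\<bar> / (S i * S i') \<le> real p * (\<delta> / c * S i') / (S i * S i')"
    using S_pos by (intro divide_right_mono mult_left_mono) (auto intro: mult_pos_pos less_imp_le)
  moreover have "psi0 p psi i' - psi0 p psi i = real p * (S i - S i') / (S i * S i')"
    unfolding psi0_eq S_def[symmetric] using S_pos by (simp add: field_simps)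
  ultimately show ?thesis
    unfolding psi0_eq S_def[symmetric] using S_pos by (simp add: abs_mult abs_divide mult.commute)
qed

lemma two_scale_period: "two_scale N p g \<Longrightarrow> g i (int p + 1) = g i 1"
  unfolding two_scale_def by (metis add.commute)

lemma sum_DY_two_scale:
  assumes "two_scale N p g"
  shows "(\<Sum>j = 1..int p. DY g i j) = 0"
proof -
  have "{1..int p} = {1..<int p + 1}" by auto
  moreover have "g i (int p + 1) = g i 1" using assms by (rule two_scale_period)
  ultimately show ?thesis
    unfolding DY_def using sum_int_telescope[of 1 "int p + 1" "g i"] by simp
qed

lemma cell_solution_DY:
  assumes "p > 0" and psi_pos: "\<And>i j. psi i j > 0" and "cell_solution N p psi chi"
  shows "DY chi i j = psi0 p psi i / psi i j - 1"
proof -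
  define F where "F j = psi i j * (1 + DY chi i j)" for j
  have cell_eq: "- DY (\<lambda>i' j'. psi i' j' * DY chi i' j') i j = DY psi i j" for j
    using assms(3) unfolding cell_solution_def by blast
  have "F (j + 1) = F j" for j
    using cell_eq[of j] unfolding F_def DY_def by (simp add: algebra_simps)
  then have F_const: "F j = F 0" for j by (rule shift_invariant_const)
  then have DY_eq: "DY chi i j = F 0 / psi i j - 1" for j
    using psi_pos[of i j] unfolding F_def by (simp add: field_simps)
  have "0 = (\<Sum>j = 1..int p. F 0 / psi i j - 1)"
    using sum_DY_two_scale[of N p chi i] assms(3) unfolding cell_solution_def DY_eq by simp
  also have "\<dots> = F 0 * (\<Sum>j = 1..int p. 1 / psi i j) - real p"
    by (simp add: sum_subtractf sum_distrib_left)
  finally have "F 0 * (\<Sum>j = 1..int p. 1 / psi i j) = real p" by simp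
  moreover have "(\<Sum>j = 1..int p. 1 / psi i j) > 0"
    using assms(1) psi_pos by (intro sum_pos) auto
  ultimately have "F 0 = psi0 p psi i" unfolding psi0_eq by (simp add: field_simps)
  then show ?thesis using DY_eq by simp
qed

lemma two_scale_abs_le_half_variation:
  assumes "p > 0" "two_scale N p g" "meanY p g i = 0" "j \<in> {1..int p}"
  shows "\<bar>g i j\<bar> \<le> (\<Sum>m = 1..int p. \<bar>DY g i m\<bar>) / 2"
proof -
  have "g i (int p + 1) = g i 1" using assms(2) by (rule two_scale_period)
  moreover have "(\<Sum>j = 1..int p. g i j) = 0"
    using assms(1,3) unfolding meanY_def by simp
  ultimately show ?thesis
    unfolding DY_def using periodic_zero_sum_abs_le[OF assms(1) _ _ assms(4)] by blast
qed

lemma two_scale_DX: "two_scale N p g \<Longrightarrow> two_scale N p (DX eps g)"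
  unfolding two_scale_def DX_def by (metis add.commute add.left_commute)

lemma meanY_DX: "meanY p (DX eps g) i = DX1 eps (meanY p g) i"
proof -
  have "(\<Sum>j = 1..int p. (g (i + 1) j - g i j) / eps)
      = ((\<Sum>j = 1..int p. g (i + 1) j) - (\<Sum>j = 1..int p. g i j)) / eps"
    by (simp add: sum_divide_distrib[symmetric] sum_subtractf)
  then show ?thesis unfolding meanY_def DX_def DX1_def by (simp add: right_diff_distrib)
qed

lemma DY_DX: "DY (DX eps g) i j = DX eps (DY g) i j"
  unfolding DY_def DX_def diff_divide_distrib by linarith

lemma abs_DY_cell_solution_le:
  assumes "p > 0" "c > 0" "\<And>i j. c \<le> psi i j" "\<And>i j. psi i j \<le> C"
    and "cell_solution N p psi chi"
  shows "\<bar>DY chi i j\<bar> \<le> C / c"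
proof -
  have psi_pos: "\<And>i j. psi i j > 0" using assms(2,3) by (meson less_le_trans)
  have "c \<le> psi0 p psi i" "psi0 p psi i \<le> C"
    using psi0_bounds[OF assms(1,2), of psi i C] assms(3,4) by blast+
  then have "0 < psi0 p psi i / psi i j" "psi0 p psi i / psi i j \<le> C / c" "1 \<le> C / c"
    using assms(2) assms(3,4)[of i j] by (auto intro: frac_le)
  then show ?thesis
    unfolding cell_solution_DY[OF assms(1) psi_pos assms(5)] by linarith
qed

lemma sum_abs_DY_cell_solution_diff_le:
  assumes "p > 0" "c > 0" "\<And>i j. c \<le> psi i j"
    and "\<And>j. j \<in> {1..int p} \<Longrightarrow> \<bar>psi i j - psi i' j\<bar> \<le> \<delta>"
    and "cell_solution N p psi chi"
  shows "(\<Sum>m = 1..int p. \<bar>DY chi i' m - DY chi i m\<bar>) \<le> 2 * real p * \<delta> / c"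
proof -
  let ?S = "\<lambda>k. \<Sum>m = 1..int p. 1 / psi k m" and ?h = "psi0 p psi"
  have psi_pos: "\<And>i j. psi i j > 0" using assms(2,3) by (meson less_le_trans)
  then have h_pos: "\<And>k. ?h k > 0" using psi0_pos assms(1) by blast
  have "(\<Sum>m = 1..int p. \<bar>DY chi i' m - DY chi i m\<bar>)
      \<le> (\<Sum>m = 1..int p. ?h i' * \<bar>1 / psi i m - 1 / psi i' m\<bar> + \<bar>?h i' - ?h i\<bar> * (1 / psi i m))"
  proof (rule sum_mono)
    fix m
    have "DY chi i' m - DY chi i m = ?h i' * (1 / psi i' m - 1 / psi i m) + (?h i' - ?h i) * (1 / psi i m)"
      unfolding cell_solution_DY[OF assms(1) psi_pos assms(5)] by (simp add: algebra_simps)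
    moreover have "?h i' > 0" "1 / psi i m > 0"
      using h_pos psi_pos[of i m] by simp_all
    ultimately show "\<bar>DY chi i' m - DY chi i m\<bar>
        \<le> ?h i' * \<bar>1 / psi i m - 1 / psi i' m\<bar> + \<bar>?h i' - ?h i\<bar> * (1 / psi i m)"
      using abs_triangle_ineq[of "?h i' * (1 / psi i' m - 1 / psi i m)" "(?h i' - ?h i) * (1 / psi i m)"]
      by (simp add: abs_mult abs_minus_commute)
  qed
  also have "\<dots> = ?h i' * (\<Sum>m = 1..int p. \<bar>1 / psi i m - 1 / psi i' m\<bar>) + \<bar>?h i' - ?h i\<bar> * ?S i"
    by (simp add: sum.distrib sum_distrib_left sum_distrib_right)
  also have "\<dots> \<le> ?h i' * (\<delta> / c * ?S i') + ?h i * \<delta> / c * ?S i"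
  proof (rule add_mono)
    show "?h i' * (\<Sum>m = 1..int p. \<bar>1 / psi i m - 1 / psi i' m\<bar>) \<le> ?h i' * (\<delta> / c * ?S i')"
      using assms psi_pos h_pos[of i']
      by (intro mult_left_mono sum_abs_inverse_diff_le) force+
    show "\<bar>?h i' - ?h i\<bar> * ?S i \<le> ?h i * \<delta> / c * ?S i"
      using assms psi_pos psi0_diff_le[of p c psi i i' \<delta>]
      by (intro mult_right_mono sum_nonneg) (force intro: less_imp_le)+
  qed
  also have "\<dots> = 2 * real p * \<delta> / c"
    using psi0_mult_sum_inverse[of p psi i] psi0_mult_sum_inverse[of p psi i'] assms(1) psi_pos
    by (simp add: field_simps)
  finally show ?thesis .
qed

lemma abs_DX_le_iff:
  assumes "eps > 0"
  shows "\<bar>DX eps g i j\<bar> \<le> B \<longleftrightarrow> \<bar>g i j - g (i + 1) j\<bar> \<le> eps * B"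
  using assms unfolding DX_def by (simp add: abs_divide abs_minus_commute pos_divide_le_eq mult.commute)

lemma Linf_cell_solution_le:
  assumes "N > 0" "p > 0" "c > 0" "\<And>i j. c \<le> psi i j" "\<And>i j. psi i j \<le> C"
    and "cell_solution N p psi chi"
  shows "Linf N p chi \<le> real p / 2 * (C / c)"
proof (rule Linf_leI[OF assms(1,2)])
  fix i j assume "j \<in> {1..int p}"
  then have "\<bar>chi i j\<bar> \<le> (\<Sum>m = 1..int p. \<bar>DY chi i m\<bar>) / 2"
    using assms(2,6) unfolding cell_solution_def by (blast intro: two_scale_abs_le_half_variation)
  also have "\<dots> \<le> (\<Sum>m = 1..int p. C / c) / 2"
    using abs_DY_cell_solution_le[OF assms(2-6)] by (intro divide_right_mono sum_mono) auto
  finally show "\<bar>chi i j\<bar> \<le> real p / 2 * (C / c)" by simp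
qed

lemma abs_DX1_psi0_le:
  assumes "eps > 0" "p > 0" "c > 0" "\<And>i j. c \<le> psi i j" "\<And>i j. psi i j \<le> C"
    and DX_le: "\<And>j. j \<in> {1..int p} \<Longrightarrow> \<bar>DX eps psi i j\<bar> \<le> C'"
  shows "\<bar>DX1 eps (psi0 p psi) i\<bar> \<le> C / c * C'"
proof -
  have "0 \<le> C'" using DX_le[of 1] \<open>p > 0\<close> by force
  have "\<bar>psi0 p psi (i + 1) - psi0 p psi i\<bar> \<le> psi0 p psi i * (eps * C') / c"
    using assms(2-4) DX_le abs_DX_le_iff[OF assms(1)] by (intro psi0_diff_le) auto
  also have "\<dots> \<le> C * (eps * C') / c"
    using psi0_bounds[OF assms(2,3), of psi i C] assms(1,3-5) \<open>0 \<le> C'\<close>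
    by (intro divide_right_mono mult_right_mono) auto
  finally show ?thesis
    using assms(1) unfolding DX1_def by (simp add: abs_divide divide_le_eq field_simps)
qed

lemma abs_DX_cell_solution_le:
  assumes "eps > 0" "p > 0" "c > 0" "\<And>i j. c \<le> psi i j"
    and DX_le: "\<And>j. j \<in> {1..int p} \<Longrightarrow> \<bar>DX eps psi i j\<bar> \<le> C'"
    and cell: "cell_solution N p psi chi" and "j \<in> {1..int p}"
  shows "\<bar>DX eps chi i j\<bar> \<le> real p * (C' / c)"
proof -
  have "two_scale N p (DX eps chi)" "meanY p (DX eps chi) i = 0"
    using cell unfolding cell_solution_def meanY_DX DX1_def by (simp_all add: two_scale_DX)
  then have "\<bar>DX eps chi i j\<bar> \<le> (\<Sum>m = 1..int p. \<bar>DY (DX eps chi) i m\<bar>) / 2"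
    using two_scale_abs_le_half_variation assms(2,7) by blast
  also have "\<dots> = (\<Sum>m = 1..int p. \<bar>DY chi (i + 1) m - DY chi i m\<bar>) / (2 * eps)"
    using assms(1) unfolding DY_DX DX_def by (simp add: abs_divide sum_divide_distrib mult.commute)
  also have "\<dots> \<le> 2 * real p * (eps * C') / c / (2 * eps)"
    using assms(1-4) cell DX_le abs_DX_le_iff[OF assms(1)]
    by (intro divide_right_mono sum_abs_DY_cell_solution_diff_le) auto
  also have "\<dots> = real p * (C' / c)"
    using assms(1) by simp
  finally show ?thesis .
qed

theorem lemma4p3:
  fixes eps c_psi C_psi C'_psi :: real and N p :: nat
    and psi chi :: "int \<Rightarrow> int \<Rightarrow> real"
  assumes "eps > 0" and "N > 0" and "p > 0"
    and "two_scale N p psi"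
    and "0 < c_psi"
    and "\<And>i j. c_psi \<le> psi i j" and "\<And>i j. psi i j \<le> C_psi"
    and "cell_solution N p psi chi"
  shows "Linf N p chi \<le> real p / 2 * (C_psi / c_psi)
    \<and> (Linf N p (DX eps psi) \<le> C'_psi \<longrightarrow>
        Max ((\<lambda>i. \<bar>DX1 eps (psi0 p psi) i\<bar>) ` {1..int N}) \<le> C_psi / c_psi * C'_psi
        \<and> Linf N p (DX eps chi) \<le> real p * (C'_psi / c_psi))"
proof (intro conjI impI)
  show "Linf N p chi \<le> real p / 2 * (C_psi / c_psi)"
    using Linf_cell_solution_le assms(2,3,5-8) .
  assume "Linf N p (DX eps psi) \<le> C'_psi"
  then have DX_le: "\<bar>DX eps psi i j\<bar> \<le> C'_psi" if "i \<in> {1..int N}" "j \<in> {1..int p}" for i j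
    using abs_le_Linf[OF that, of "DX eps psi"] by linarith
  have "\<bar>DX1 eps (psi0 p psi) i\<bar> \<le> C_psi / c_psi * C'_psi" if "i \<in> {1..int N}" for i
    by (rule abs_DX1_psi0_le[OF assms(1,3,5-7) DX_le[OF that]])
  then show "Max ((\<lambda>i. \<bar>DX1 eps (psi0 p psi) i\<bar>) ` {1..int N}) \<le> C_psi / c_psi * C'_psi"
    using assms(2) by (simp add: Max_le_iff)
  show "Linf N p (DX eps chi) \<le> real p * (C'_psi / c_psi)"
    using assms(1-3,5,6,8) DX_le by (intro Linf_leI abs_DX_cell_solution_le) auto
qed

end
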